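(* The complete bipartite graph $K_{3,3}$ is not isomorphic to the rook equivalence graph $G(B)$ of any Ferrers board $B$.
   Context: A Ferrers board is given by a weakly increasing sequence of non-negative integers $B=(b_1,\ldots,b_n)$ of column heights; it is the set of unit cells in the first quadrant lying in column $i$ and rows $1,\ldots,b_i$. Prepending columns of height $0$ on the left does not change the board, and boards are compared using the same number of columns by such padding. A placement of $k$ rooks on $B$ is a set of $k$ cells of $B$ no two in the same row or column; $r_k(B)$ is the number of such placements. Two boards are rook equivalent if they have equal $r_k$ for all $k\ge 0$. The rook equivalence graph $G(B)$ has as vertices all Ferrers boards rook equivalent to $B$, and $\{B_1,B_2\}$ is an edge iff, written with the same number of columns, $B_1$ and $B_2$ differ in exactly two columns $i$ and $j$, where $B_1$ has $k$ more cells than $B_2$ in column $i$ and $k$ fewer cells than $B_2$ in column $j$, for some $k>0$. *)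

theory Defs
  imports Main
begin

text \<open>A Ferrers board is a weakly increasing list of column heights (sorted list of nats).
  Column i (0-based) contains the cells in rows 1..b_i.\<close>

definition cells :: "nat list \<Rightarrow> (nat \<times> nat) set" where
  "cells B = {(i, j). i < length B \<and> 1 \<le> j \<and> j \<le> B ! i}"

definition rook_placements :: "nat list \<Rightarrow> nat \<Rightarrow> (nat \<times> nat) set set" where
  "rook_placements B k = {P. P \<subseteq> cells B \<and> card P = k \<and> inj_on fst P \<and> inj_on snd P}"

definition rook_num :: "nat list \<Rightarrow> nat \<Rightarrow> nat" where
  "rook_num B k = card (rook_placements B k)"

definition rook_equiv :: "nat list \<Rightarrow> nat list \<Rightarrow> bool" where
  "rook_equiv B1 B2 \<longleftrightarrow> (\<forall>k. rook_num B1 k = rook_num B2 k)"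

text \<open>Boards modulo prepended zero columns: canonical representative has no zero column.\<close>
definition canonical_board :: "nat list \<Rightarrow> bool" where
  "canonical_board B \<longleftrightarrow> sorted B \<and> 0 \<notin> set B"

definition pad :: "nat \<Rightarrow> nat list \<Rightarrow> nat list" where
  "pad n B = replicate (n - length B) 0 @ B"

definition rook_edge :: "nat list \<Rightarrow> nat list \<Rightarrow> bool" where
  "rook_edge B1 B2 \<longleftrightarrow>
     (let n = max (length B1) (length B2); P1 = pad n B1; P2 = pad n B2 in
      \<exists>i j k. i < n \<and> j < n \<and> i \<noteq> j \<and> k > 0 \<and>
        P1 ! i = P2 ! i + k \<and> P2 ! j = P1 ! j + k \<and>
        (\<forall>l<n. l \<noteq> i \<longrightarrow> l \<noteq> j \<longrightarrow> P1 ! l = P2 ! l))"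

definition rook_graph_vertices :: "nat list \<Rightarrow> nat list set" where
  "rook_graph_vertices B = {C. canonical_board C \<and> rook_equiv C B}"

definition graph_iso :: "'a set \<Rightarrow> ('a \<Rightarrow> 'a \<Rightarrow> bool) \<Rightarrow> 'b set \<Rightarrow> ('b \<Rightarrow> 'b \<Rightarrow> bool) \<Rightarrow> bool" where
  "graph_iso V E W F \<longleftrightarrow>
     (\<exists>f. bij_betw f V W \<and> (\<forall>u\<in>V. \<forall>v\<in>V. E u v \<longleftrightarrow> F (f u) (f v)))"

definition K33_vertices :: "nat set" where
  "K33_vertices = {0..<6}"

definition K33_edge :: "nat \<Rightarrow> nat \<Rightarrow> bool" where
  "K33_edge a b \<longleftrightarrow> (a < 3 \<longleftrightarrow> 3 \<le> b)"

end

theory Submission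
  imports Defs "HOL-Computational_Algebra.Polynomial"
begin

text \<open>
  By the factorization theorem of Goldman, Joichi and White,
  \<open>\<Sum>k. r\<^sub>k(B) * x(x-1)...(x-n+k+1) = \<Prod>i<n. (x + b\<^sub>i - i)\<close> for a board padded to
  \<open>n\<close> columns, so two boards are rook equivalent iff the multisets of their offsets
  \<open>b\<^sub>i - i\<close> agree. Hence \<open>G(B)\<close> is isomorphic to the graph on all integer sequences with a
  fixed multiset that are offsets of boards (\<open>c\<^sub>0 \<ge> 0\<close> and \<open>c\<^sub>i\<^sub>+\<^sub>1 \<ge> c\<^sub>i - 1\<close>), two
  sequences being adjacent iff they differ in exactly two positions.
  Suppose this graph were \<open>K\<^sub>3\<^sub>,\<^sub>3\<close>. Vertices on the same side then differ in at least three
  positions. If some pair differs in exactly three, the triangle inequality for the Hamming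
  distance forces all six vertices to agree outside these three positions, so they are the six
  arrangements of three distinct values there, and shifting a block of entries produces a seventh
  vertex. If all such pairs differ in at least four positions, every other vertex on the side of a
  vertex \<open>x\<close> is determined by \<open>x\<close> and two vertices of the opposite side, so two of them coincide.
\<close>

section \<open>Counting rook placements\<close>

lemma finite_cells: "finite (cells b)"
  by (rule finite_subset[of _ "SIGMA i:{..<length b}. {1..b ! i}"]) (auto simp: cells_def)

lemma finite_rook_placements: "finite (rook_placements b k)"
  by (rule finite_subset[of _ "Pow (cells b)"]) (auto simp: rook_placements_def finite_cells)

lemma rook_num_0 [simp]: "rook_num b 0 = 1"
proof -
  have "rook_placements b 0 = {{}}"
    using finite_cells by (auto simp: rook_placements_def card_eq_0_iff dest: finite_subset)
  then show ?thesis by (simp add: rook_num_def)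
qed

lemma rook_num_1: "rook_num b 1 = card (cells b)"
proof -
  have "rook_placements b 1 = (\<lambda>c. {c}) ` cells b"
    by (auto simp: rook_placements_def card_1_singleton_iff)
  then show ?thesis by (simp add: rook_num_def card_image)
qed

lemma cells_snoc: "cells (b @ [h]) = cells b \<union> {length b} \<times> {1..h}"
  by (auto simp: cells_def nth_append less_Suc_eq)

lemma card_cells: "card (cells b) = sum_list b"
proof (induction b rule: rev_induct)
  case (snoc h b)
  have "cells b \<inter> {length b} \<times> {1..h} = {}"
    by (auto simp: cells_def)
  then show ?case
    using snoc.IH by (simp add: cells_snoc card_Un_disjoint finite_cells card_cartesian_product)
qed (simp add: cells_def)

lemma sum_list_eq_if_rook_equiv: "rook_equiv C B \<Longrightarrow> sum_list C = sum_list B"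
  using rook_num_1[of C] rook_num_1[of B] by (simp add: rook_equiv_def card_cells)

lemma rook_placement_card_le:
  assumes "P \<in> rook_placements b k"
  shows "k \<le> length b" and "(\<forall>x\<in>set b. x \<le> h) \<Longrightarrow> k \<le> h"
proof -
  have P: "P \<subseteq> cells b" "card P = k" "inj_on fst P" "inj_on snd P"
    using assms by (auto simp: rook_placements_def)
  have "fst ` P \<subseteq> {..<length b}" using P(1) by (auto simp: cells_def)
  from card_mono[OF _ this] show "k \<le> length b"
    using P by (simp add: card_image)
  assume "\<forall>x\<in>set b. x \<le> h"
  then have "snd ` P \<subseteq> {1..h}"
    using P(1) by (force simp: cells_def dest: nth_mem)
  from card_mono[OF _ this] show "k \<le> h"
    using P by (simp add: card_image)
qed

lemma rook_num_eq_0_if_length_less: "length b < k \<Longrightarrow> rook_num b k = 0"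
  using rook_placement_card_le(1)[of _ b k] by (force simp: rook_num_def)

lemma rook_num_eq_0_if_height_less: "\<forall>x\<in>set b. x \<le> h \<Longrightarrow> h < k \<Longrightarrow> rook_num b k = 0"
  using rook_placement_card_le(2)[of _ b k h] by (force simp: rook_num_def)

lemma rook_placements_snoc_avoiding_last:
  "{P \<in> rook_placements (b @ [h]) k. length b \<notin> fst ` P} = rook_placements b k"
proof -
  have "length b \<notin> fst ` cells b" by (auto simp: cells_def)
  then have "P \<subseteq> cells (b @ [h]) \<and> length b \<notin> fst ` P \<longleftrightarrow> P \<subseteq> cells b" for P
    unfolding cells_snoc by (auto intro: rev_image_eqI)
  then show ?thesis by (auto simp: rook_placements_def)
qed

lemma rook_placements_snoc_using_last:
  "{P \<in> rook_placements (b @ [h]) (Suc k). length b \<in> fst ` P}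
     = (\<lambda>(Q, j). insert (length b, j) Q) ` (SIGMA Q:rook_placements b k. {1..h} - snd ` Q)"
  (is "?L = ?f ` ?S")
proof (intro equalityI subsetI)
  fix P assume "P \<in> ?L"
  then obtain j where j: "(length b, j) \<in> P" and P: "P \<subseteq> cells (b @ [h])" "card P = Suc k"
    "inj_on fst P" "inj_on snd P" by (auto simp: rook_placements_def)
  let ?Q = "P - {(length b, j)}"
  have "?Q \<subseteq> cells b"
    using P(1,3) j unfolding inj_on_def cells_snoc by fastforce
  moreover have "card ?Q = k"
    using P(2) j finite_subset[OF P(1) finite_cells] by simp
  ultimately have "?Q \<in> rook_placements b k"
    using P(3,4) by (auto simp: rook_placements_def intro: inj_on_subset)
  moreover have "j \<in> {1..h}"
    using j P(1) by (auto simp: cells_snoc cells_def)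
  moreover have "j \<notin> snd ` ?Q"
    using j P(4) by (force simp: inj_on_def)
  moreover have "P = insert (length b, j) ?Q" using j by auto
  ultimately show "P \<in> ?f ` ?S" by (intro image_eqI[where x = "(?Q, j)"]) auto
next
  fix P assume "P \<in> ?f ` ?S"
  then obtain Q j where Q: "Q \<in> rook_placements b k" and j: "j \<in> {1..h}" "j \<notin> snd ` Q"
    and P: "P = insert (length b, j) Q" by auto
  have Q': "Q \<subseteq> cells b" "card Q = k" "inj_on fst Q" "inj_on snd Q"
    using Q by (auto simp: rook_placements_def)
  then have "(length b, j) \<notin> Q" "length b \<notin> fst ` Q" "finite Q"
    using finite_cells finite_subset by (auto simp: cells_def)
  then show "P \<in> ?L"
    using Q' j by (auto simp: P rook_placements_def cells_snoc rev_image_eqI)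
qed

lemma inj_on_insert_last_column:
  "inj_on (\<lambda>(Q, j). insert (length b, j) Q) (SIGMA Q:rook_placements b k. {1..h} - snd ` Q)"
proof (rule inj_onI, clarsimp)
  fix Q j Q' j'
  assume "Q \<in> rook_placements b k" "Q' \<in> rook_placements b k"
    and eq: "insert (length b, j) Q = insert (length b, j') Q'"
  then have last_column: "(length b, i) \<notin> Q" "(length b, i) \<notin> Q'" for i
    by (auto simp: rook_placements_def cells_def)
  then have "j = j'"
    using eq by blast
  with eq last_column show "Q = Q' \<and> j = j'"
    by (simp add: insert_ident)
qed

lemma rook_num_snoc:
  assumes "\<forall>x\<in>set b. x \<le> h"
  shows "rook_num (b @ [h]) (Suc k) = rook_num b (Suc k) + (h - k) * rook_num b k"
proof -
  let ?R = "rook_placements (b @ [h]) (Suc k)"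
  let ?A = "{P \<in> ?R. length b \<notin> fst ` P}" and ?B = "{P \<in> ?R. length b \<in> fst ` P}"
  let ?S = "SIGMA Q:rook_placements b k. {1..h} - snd ` Q"
  have "card ?R = card (?A \<union> ?B)"
    by (rule arg_cong[where f = card]) blast
  also have "\<dots> = card ?A + card ?B"
    by (rule card_Un_disjoint) (auto simp: finite_rook_placements)
  also have "card ?A = rook_num b (Suc k)"
    by (simp add: rook_num_def rook_placements_snoc_avoiding_last)
  also have "card ?B = card ?S"
    unfolding rook_placements_snoc_using_last by (rule card_image[OF inj_on_insert_last_column])
  also have "\<dots> = (\<Sum>Q\<in>rook_placements b k. card ({1..h} - snd ` Q))"
    by (rule card_SigmaI) (auto simp: finite_rook_placements)
  also have "\<dots> = (\<Sum>Q\<in>rook_placements b k. h - k)"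
  proof (rule sum.cong)
    fix Q assume "Q \<in> rook_placements b k"
    then have "snd ` Q \<subseteq> {1..h}" "card (snd ` Q) = k"
      using assms by (force simp: rook_placements_def cells_def card_image dest: nth_mem)+
    then show "card ({1..h} - snd ` Q) = h - k"
      by (simp add: card_Diff_subset finite_subset)
  qed simp
  finally show ?thesis
    by (simp add: rook_num_def)
qed

lemma rook_num_snoc_int:
  assumes "\<forall>x\<in>set b. x \<le> h"
  shows "int (rook_num (b @ [h]) (Suc k))
           = int (rook_num b (Suc k)) + (int h - int k) * int (rook_num b k)"
  using rook_num_snoc[OF assms, of k] rook_num_eq_0_if_height_less[OF assms, of k]
  by (cases "k \<le> h") auto

section \<open>The factorization theorem\<close>

definition falling_fact :: "int \<Rightarrow> nat \<Rightarrow> int" where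
  "falling_fact x m = (\<Prod>i<m. x - int i)"

lemma falling_fact_0 [simp]: "falling_fact x 0 = 1"
  by (simp add: falling_fact_def)

lemma falling_fact_Suc: "falling_fact x (Suc m) = falling_fact x m * (x - int m)"
  by (simp add: falling_fact_def)

lemma falling_fact_add: "falling_fact x (d + m) = falling_fact x d * falling_fact (x - int d) m"
  by (induction m) (simp_all add: falling_fact_Suc algebra_simps)

lemma falling_fact_of_nat_eq_0: "t < m \<Longrightarrow> falling_fact (int t) m = 0"
  by (auto simp: falling_fact_def)

lemma falling_fact_of_nat_self_pos: "falling_fact (int m) m > 0"
  by (auto simp: falling_fact_def intro: prod_pos)

definition offsets :: "nat list \<Rightarrow> int list" where
  "offsets b = map (\<lambda>i. int (b ! i) - int i) [0..<length b]"

lemma length_offsets [simp]: "length (offsets b) = length b"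
  by (simp add: offsets_def)

lemma nth_offsets [simp]: "i < length b \<Longrightarrow> offsets b ! i = int (b ! i) - int i"
  by (simp add: offsets_def)

lemma offsets_snoc: "offsets (b @ [h]) = offsets b @ [int h - int (length b)]"
  by (simp add: offsets_def nth_append)

lemma offsets_replicate_0_append:
  "offsets (replicate d 0 @ b) = map (\<lambda>i. - int i) [0..<d] @ map (\<lambda>c. c - int d) (offsets b)"
  by (rule nth_equalityI) (auto simp: nth_append)

theorem rook_num_factorization:
  assumes "sorted b"
  shows "(\<Sum>k\<le>length b. int (rook_num b k) * falling_fact x (length b - k)) = (\<Prod>c\<leftarrow>offsets b. x + c)"
  using assms
proof (induction b rule: rev_induct)
  case (snoc h b)
  let ?n = "length b"
  let ?r = "\<lambda>k. int (rook_num b k)"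
  have "sorted b" and le_h: "\<forall>y\<in>set b. y \<le> h"
    using snoc.prems by (auto simp: sorted_append)
  have "(\<Sum>k\<le>Suc ?n. int (rook_num (b @ [h]) k) * falling_fact x (Suc ?n - k))
      = falling_fact x (Suc ?n) + (\<Sum>k\<le>?n. ?r (Suc k) * falling_fact x (?n - k))
        + (\<Sum>k\<le>?n. (int h - int k) * ?r k * falling_fact x (?n - k))"
    by (simp add: sum.atMost_Suc_shift rook_num_snoc_int[OF le_h] distrib_right sum.distrib
        add.assoc
        del: sum.atMost_Suc)
  also have "falling_fact x (Suc ?n) + (\<Sum>k\<le>?n. ?r (Suc k) * falling_fact x (?n - k))
      = (\<Sum>k\<le>Suc ?n. ?r k * falling_fact x (Suc ?n - k))"
    by (simp add: sum.atMost_Suc_shift del: sum.atMost_Suc)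
  also have "\<dots> = (\<Sum>k\<le>?n. ?r k * falling_fact x (?n - k) * (x - int (?n - k)))"
    by (simp add: rook_num_eq_0_if_length_less Suc_diff_le falling_fact_Suc mult.assoc)
  also have "\<dots> + (\<Sum>k\<le>?n. (int h - int k) * ?r k * falling_fact x (?n - k))
      = (\<Sum>k\<le>?n. ?r k * falling_fact x (?n - k)) * (x + int h - int ?n)"
    unfolding sum_distrib_right sum.distrib[symmetric]
    by (rule sum.cong) (auto simp: algebra_simps)
  also have "\<dots> = (\<Prod>c\<leftarrow>offsets (b @ [h]). x + c)"
    using snoc.IH[OF \<open>sorted b\<close>] by (simp add: offsets_snoc algebra_simps)
  finally show ?case by simp
qed (simp add: offsets_def)

lemma rook_num_factorization_pad:
  assumes "sorted b" "length b \<le> n"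
  shows "(\<Sum>k\<le>n. int (rook_num b k) * falling_fact x (n - k)) = (\<Prod>c\<leftarrow>offsets (pad n b). x + c)"
proof -
  define m d where "m = length b" and "d = n - length b"
  have n: "n = d + m" using assms(2) by (simp add: m_def d_def)
  have "(\<Sum>k\<le>n. int (rook_num b k) * falling_fact x (n - k))
      = (\<Sum>k\<le>m. int (rook_num b k) * falling_fact x (d + (m - k)))"
    by (rule sum.mono_neutral_cong_right) (auto simp: n m_def rook_num_eq_0_if_length_less)
  also have "\<dots> = falling_fact x d * (\<Sum>k\<le>m. int (rook_num b k) * falling_fact (x - int d) (m - k))"
    unfolding falling_fact_add sum_distrib_left by (simp add: mult.left_commute)
  also have "\<dots> = falling_fact x d * (\<Prod>c\<leftarrow>offsets b. x - int d + c)"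
    using rook_num_factorization[OF assms(1)] by (simp add: m_def)
  also have "\<dots> = (\<Prod>c\<leftarrow>offsets (pad n b). x + c)"
    by (simp add: pad_def d_def offsets_replicate_0_append falling_fact_def
        prod.distinct_set_conv_list[symmetric] atLeast0LessThan o_def algebra_simps)
  finally show ?thesis .
qed

lemma falling_fact_coeffs_unique:
  fixes a a' :: "nat \<Rightarrow> int"
  assumes eq: "\<And>x. (\<Sum>k\<le>n. a k * falling_fact x (n - k)) = (\<Sum>k\<le>n. a' k * falling_fact x (n - k))"
    and "k \<le> n"
  shows "a k = a' k"
  using \<open>k \<le> n\<close>
proof (induction "n - k" arbitrary: k rule: less_induct)
  case less
  let ?x = "int (n - k)"
  have "(\<Sum>j\<in>{..n} - {k}. (a j - a' j) * falling_fact ?x (n - j)) = 0"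
  proof (rule sum.neutral, intro ballI)
    fix j assume j: "j \<in> {..n} - {k}"
    show "(a j - a' j) * falling_fact ?x (n - j) = 0"
    proof (cases "j < k")
      case True
      then show ?thesis using less.prems falling_fact_of_nat_eq_0[of "n - k" "n - j"] by simp
    next
      case False
      then have "a j = a' j" using j less.prems by (intro less.hyps) auto
      then show ?thesis by simp
    qed
  qed
  moreover have "(\<Sum>j\<le>n. (a j - a' j) * falling_fact ?x (n - j)) = 0"
    using eq[of ?x] by (simp add: left_diff_distrib sum_subtractf)
  ultimately have "(a k - a' k) * falling_fact ?x (n - k) = 0"
    using less.prems by (simp add: sum.remove)
  then show ?case
    using falling_fact_of_nat_self_pos[of "n - k"] by simp
qed

lemma mset_eq_if_prod_linear_eq:
  fixes u w :: "int list"
  assumes "\<And>x. (\<Prod>c\<leftarrow>u. x + c) = (\<Prod>c\<leftarrow>w. x + c)"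
  shows "mset u = mset w"
proof -
  have poly: "poly (\<Prod>c\<leftarrow>v. [:c, 1:]) x = (\<Prod>c\<leftarrow>v. x + c)" for v x
    by (induction v) (simp_all add: algebra_simps)
  have proots: "proots (\<Prod>c\<leftarrow>v. [:c, 1:]) = image_mset uminus (mset v)" for v :: "int list"
  proof (induction v)
    case (Cons c v)
    have "(\<Prod>c\<leftarrow>v. [:c, 1:]) \<noteq> 0" by (auto simp: prod_list_zero_iff)
    then show ?case using Cons.IH by (simp add: proots_mult del: mult_pCons_left)
  qed simp
  have "(\<Prod>c\<leftarrow>u. [:c, 1:]) = (\<Prod>c\<leftarrow>w. [:c, 1:])"
    using assms by (simp add: poly_eq_poly_eq_iff[symmetric] poly fun_eq_iff)
  then have "image_mset uminus (mset u) = image_mset uminus (mset w)"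
    by (metis proots)
  then have "image_mset uminus (image_mset uminus (mset u))
      = image_mset uminus (image_mset uminus (mset w))"
    by (rule arg_cong)
  then show ?thesis by (simp add: multiset.map_comp o_def)
qed

theorem rook_equiv_iff_mset_offsets:
  assumes "sorted b1" "sorted b2" "length b1 \<le> n" "length b2 \<le> n"
  shows "rook_equiv b1 b2 \<longleftrightarrow> mset (offsets (pad n b1)) = mset (offsets (pad n b2))"
proof
  assume "rook_equiv b1 b2"
  then show "mset (offsets (pad n b1)) = mset (offsets (pad n b2))"
    using rook_num_factorization_pad[OF assms(1,3)] rook_num_factorization_pad[OF assms(2,4)]
    by (intro mset_eq_if_prod_linear_eq) (simp add: rook_equiv_def)
next
  assume mset_eq: "mset (offsets (pad n b1)) = mset (offsets (pad n b2))"
  show "rook_equiv b1 b2"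
    unfolding rook_equiv_def
  proof
    fix k
    show "rook_num b1 k = rook_num b2 k"
    proof (cases "k \<le> n")
      case True
      have "(\<Sum>k\<le>n. int (rook_num b1 k) * falling_fact x (n - k))
          = (\<Sum>k\<le>n. int (rook_num b2 k) * falling_fact x (n - k))" for x
        unfolding rook_num_factorization_pad[OF assms(1,3)]
          rook_num_factorization_pad[OF assms(2,4)]
        using mset_eq by (metis mset_map prod_mset_prod_list)
      then have "int (rook_num b1 k) = int (rook_num b2 k)"
        using True by (rule falling_fact_coeffs_unique)
      then show ?thesis by simp
    qed (use assms rook_num_eq_0_if_length_less in simp)
  qed
qed

section \<open>Mismatch sets\<close>

definition mismatches :: "'a list \<Rightarrow> 'a list \<Rightarrow> nat set" where
  "mismatches u w = {l. l < length u \<and> u ! l \<noteq> w ! l}"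

lemma mismatches_subset: "mismatches u w \<subseteq> {..<length u}"
  by (auto simp: mismatches_def)

lemma finite_mismatches [simp]: "finite (mismatches u w)"
  using mismatches_subset finite_subset by blast

lemma mismatches_commute: "length u = length w \<Longrightarrow> mismatches u w = mismatches w u"
  by (auto simp: mismatches_def)

lemma mismatches_triangle: "length u = length v \<Longrightarrow> mismatches u w \<subseteq> mismatches u v \<union> mismatches v w"
  by (auto simp: mismatches_def)

lemma mismatches_eq_empty_iff: "length u = length w \<Longrightarrow> mismatches u w = {} \<longleftrightarrow> u = w"
  by (auto simp: mismatches_def intro: nth_equalityI)

lemma image_mset_nth_eq_if_agree_outside:
  assumes "mset u = mset w" "D \<subseteq> {..<length u}"
    and agree: "\<And>l. l < length u \<Longrightarrow> l \<notin> D \<Longrightarrow> u ! l = w ! l"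
  shows "image_mset (nth u) (mset_set D) = image_mset (nth w) (mset_set D)"
proof -
  let ?E = "{..<length u} - D"
  have len: "length w = length u" using assms(1) by (metis mset_eq_length)
  have "D \<union> ?E = {..<length u}" using assms(2) by blast
  moreover have "mset_set (D \<union> ?E) = mset_set D + mset_set ?E"
    using assms(2) finite_subset by (intro mset_set_Union) auto
  ultimately have split: "mset_set {..<length u} = mset_set D + mset_set ?E" by simp
  have mset_nth: "mset v = image_mset (nth v) (mset_set {..<length v})" for v :: "'a list"
    by (metis map_nth mset_map mset_upt atLeast0LessThan)
  have "image_mset (nth u) (mset_set ?E) = image_mset (nth w) (mset_set ?E)"
    using agree by (intro image_mset_cong) auto
  then show ?thesis
    using assms(1) mset_nth[of u] mset_nth[of w] by (simp add: len split)
qed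

lemma card_mismatches_ne_1:
  assumes "mset u = mset w" shows "card (mismatches u w) \<noteq> 1"
proof
  assume "card (mismatches u w) = 1"
  then obtain i where i: "mismatches u w = {i}" by (rule card_1_singletonE)
  then have "image_mset (nth u) (mset_set {i}) = image_mset (nth w) (mset_set {i})"
    using assms by (intro image_mset_nth_eq_if_agree_outside) (auto simp: mismatches_def)
  then show False using i by (auto simp: mismatches_def)
qed

text \<open>If \<open>x\<close> lies on a shortest path from \<open>y\<close> to \<open>y'\<close> in the Hamming metric up to one unit of
  slack, a position where \<open>y\<close> and \<open>y'\<close> agree cannot be a mismatch of \<open>x\<close>: it would be counted
  twice on the left-hand side.\<close>
lemma nth_eq_if_nearly_between:
  assumes "length x = length y" "length y' = length y"
    and slack: "card (mismatches x y) + card (mismatches x y') \<le> card (mismatches y y') + 1"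
    and l: "l < length y" "l \<notin> mismatches y y'"
  shows "x ! l = y ! l"
proof (rule ccontr)
  assume "x ! l \<noteq> y ! l"
  with assms have l_both: "l \<in> mismatches x y \<inter> mismatches x y'"
    by (auto simp: mismatches_def)
  have "insert l (mismatches y y') \<subseteq> mismatches x y \<union> mismatches x y'"
    using mismatches_triangle[of y x y'] mismatches_commute[of x y] l_both assms(1,2) by auto
  from card_mono[OF _ this]
  have "card (mismatches y y') + 1 \<le> card (mismatches x y \<union> mismatches x y')"
    using l(2) by simp
  moreover have "card (mismatches x y \<inter> mismatches x y') \<ge> 1"
    using l_both by (auto simp: Suc_le_eq card_gt_0_iff)
  moreover have "card (mismatches x y \<union> mismatches x y') + card (mismatches x y \<inter> mismatches x y')
      = card (mismatches x y) + card (mismatches x y')"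
    using card_Un_Int[of "mismatches x y" "mismatches x y'"] by simp
  ultimately show False using slack by linarith
qed

lemma biclique_agrees_off_mismatches:
  assumes len: "\<And>v. v \<in> X \<union> Y \<Longrightarrow> length v = n"
    and across: "\<And>x y. x \<in> X \<Longrightarrow> y \<in> Y \<Longrightarrow> card (mismatches x y) = 2"
    and x: "x \<in> X" "x' \<in> X" "3 \<le> card (mismatches x x')"
    and y: "y \<in> Y" "y' \<in> Y" "card (mismatches y y') = 3"
    and v: "v \<in> X \<union> Y" and l: "l < n" "l \<notin> mismatches y y'"
  shows "v ! l = y ! l"
proof -
  let ?D = "mismatches y y'"
  have X_agree: "u ! i = y ! i" if "u \<in> X" "i < n" "i \<notin> ?D" for u i
    using that len across y by (intro nth_eq_if_nearly_between) auto
  have "mismatches x x' \<subseteq> ?D"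
  proof
    fix i assume "i \<in> mismatches x x'"
    then have "i < n" "x ! i \<noteq> x' ! i" using len x by (auto simp: mismatches_def)
    then show "i \<in> ?D" using X_agree[of x i] X_agree[of x' i] x by (cases "i \<in> ?D") auto
  qed
  then have D: "mismatches x x' = ?D"
    using x(3) y(3) by (intro card_seteq) auto
  have "w ! l = x ! l" if "w \<in> Y" for w
  proof (rule nth_eq_if_nearly_between)
    show "card (mismatches w x) + card (mismatches w x') \<le> card (mismatches x x') + 1"
      using that x y across[of x w] across[of x' w] len mismatches_commute[of w] by (simp add: D)
  qed (use that x len l D in auto)
  then show ?thesis
    using v l x X_agree by auto
qed

lemma mismatches_partition_if_between:
  assumes "length x = length y" "length y' = length y"
    and "card (mismatches x y) = 2" "card (mismatches x y') = 2" "4 \<le> card (mismatches y y')"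
  shows "mismatches y y' = mismatches x y \<union> mismatches x y'"
    and "mismatches x y \<inter> mismatches x y' = {}"
proof -
  have sub: "mismatches y y' \<subseteq> mismatches x y \<union> mismatches x y'"
    using mismatches_triangle[of y x y'] mismatches_commute[of x y] assms(1,2) by simp
  moreover have "card (mismatches x y \<union> mismatches x y') \<le> 4"
    using card_Un_le[of "mismatches x y" "mismatches x y'"] assms(3,4) by simp
  ultimately show eq: "mismatches y y' = mismatches x y \<union> mismatches x y'"
    using assms(5) by (intro card_seteq) auto
  have "card (mismatches x y \<union> mismatches x y') + card (mismatches x y \<inter> mismatches x y') = 4"
    using card_Un_Int[of "mismatches x y" "mismatches x y'"] assms(3,4) by simp
  then have "card (mismatches x y \<inter> mismatches x y') = 0"
    using assms(5) unfolding eq by linarith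
  then show "mismatches x y \<inter> mismatches x y' = {}"
    by (simp add: card_0_eq)
qed

lemma nth_antipode:
  assumes len: "length x = n" "length z = n" "length y = n" "length y' = n"
    and x: "card (mismatches x y) = 2" "card (mismatches x y') = 2"
    and z: "card (mismatches z y) = 2" "card (mismatches z y') = 2"
    and far: "4 \<le> card (mismatches y y')" "4 \<le> card (mismatches x z)"
    and l: "l < n"
  shows "z ! l = (if l \<in> mismatches x y then y ! l else y' ! l)"
proof -
  let ?D = "mismatches y y'"
  have x_part: "?D = mismatches x y \<union> mismatches x y'" "mismatches x y \<inter> mismatches x y' = {}"
    using mismatches_partition_if_between[of x y y'] len x far(1) by simp_all
  have z_part: "?D = mismatches z y \<union> mismatches z y'" "mismatches z y \<inter> mismatches z y' = {}"
    using mismatches_partition_if_between[of z y y'] len z far(1) by simp_all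
  have agree: "v ! i = y ! i" if "v \<in> {x, z}" "i < n" "i \<notin> ?D" for v i
    using that len x z far(1) by (intro nth_eq_if_nearly_between) auto
  have "mismatches x z \<subseteq> ?D"
  proof
    fix i assume "i \<in> mismatches x z"
    then have "i < n" "x ! i \<noteq> z ! i" using len by (auto simp: mismatches_def)
    then show "i \<in> ?D" using agree[of x i] agree[of z i] by (cases "i \<in> ?D") auto
  qed
  moreover have "card ?D \<le> 4"
    using x_part(1) card_Un_le[of "mismatches x y" "mismatches x y'"] len x by simp
  ultimately have xz: "mismatches x z = ?D"
    using far(2) by (intro card_seteq) auto
  show ?thesis
  proof (cases "l \<in> ?D")
    case True
    then have "l \<in> mismatches x y \<longleftrightarrow> l \<notin> mismatches x y'"
      and "l \<in> mismatches z y \<longleftrightarrow> l \<notin> mismatches z y'"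
      using x_part z_part by blast+
    moreover have "l \<in> mismatches x z" using True xz by simp
    ultimately show ?thesis
      using l len by (auto simp: mismatches_def)
  next
    case False
    then show ?thesis
      using agree[of z l] l len x_part(1) by (auto simp: mismatches_def)
  qed
qed

section \<open>Offset sequences of boards\<close>

text \<open>The offsets \<open>c\<^sub>i = b\<^sub>i - i\<close> of a board: the prepended \<open>1\<close> encodes \<open>b\<^sub>0 \<ge> 0\<close>, and
  \<open>c\<^sub>i - 1 \<le> c\<^sub>i\<^sub>+\<^sub>1\<close> says \<open>b\<^sub>i \<le> b\<^sub>i\<^sub>+\<^sub>1\<close>.\<close>
definition is_board_offsets :: "int list \<Rightarrow> bool" where
  "is_board_offsets c \<longleftrightarrow> successively (\<lambda>a b. a - 1 \<le> b) (1 # c)"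

definition offset_class :: "nat \<Rightarrow> int multiset \<Rightarrow> int list set" where
  "offset_class n M = {c. length c = n \<and> mset c = M \<and> is_board_offsets c}"

lemma is_board_offsets_conv_nth:
  "is_board_offsets c \<longleftrightarrow> (0 < length c \<longrightarrow> 0 \<le> c ! 0) \<and> (\<forall>i. Suc i < length c \<longrightarrow> c ! i - 1 \<le> c ! Suc i)"
  unfolding is_board_offsets_def successively_Cons unfolding successively_conv_nth
  by (auto simp: hd_conv_nth simp flip: length_greater_0_conv)

lemma is_board_offsets_offsets: "sorted b \<Longrightarrow> is_board_offsets (offsets b)"
  by (auto simp: is_board_offsets_conv_nth sorted_iff_nth_Suc)

definition board_of_offsets :: "int list \<Rightarrow> nat list" where
  "board_of_offsets c = map (\<lambda>i. nat (c ! i + int i)) [0..<length c]"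

lemma length_board_of_offsets [simp]: "length (board_of_offsets c) = length c"
  by (simp add: board_of_offsets_def)

lemma board_of_offsets_offsets [simp]: "board_of_offsets (offsets b) = b"
  by (rule nth_equalityI) (simp_all add: board_of_offsets_def)

lemma is_board_offsets_nonneg: "is_board_offsets c \<Longrightarrow> i < length c \<Longrightarrow> 0 \<le> c ! i + int i"
proof (induction i)
  case (Suc i)
  then show ?case by (force simp: is_board_offsets_conv_nth)
qed (auto simp: is_board_offsets_conv_nth)

lemma offsets_board_of_offsets:
  "is_board_offsets c \<Longrightarrow> offsets (board_of_offsets c) = c"
  by (rule nth_equalityI) (simp_all add: board_of_offsets_def is_board_offsets_nonneg)

lemma sorted_board_of_offsets: "is_board_offsets c \<Longrightarrow> sorted (board_of_offsets c)"
  by (auto simp: sorted_iff_nth_Suc board_of_offsets_def is_board_offsets_conv_nth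
      intro!: nat_mono dest: is_board_offsets_nonneg)

text \<open>If all six arrangements are admissible, then \<open>G1\<close> ends at most at \<open>x + 1\<close> and \<open>G2\<close> starts
  at least at \<open>z - 1\<close>, so the two blocks can be joined and the middle entry moved behind \<open>G2\<close>.\<close>
lemma is_board_offsets_shift_block:
  fixes x y z :: int
  assumes "x < y" "y < z"
    and all: "\<And>\<alpha> \<beta> \<gamma>. {#\<alpha>, \<beta>, \<gamma>#} = {#x, y, z#} \<Longrightarrow> is_board_offsets (X1 @ \<alpha> # G1 @ \<beta> # G2 @ \<gamma> # X2)"
  shows "\<exists>A B C. {#A, B, C#} = {#x, y, z#} \<and> G2 \<noteq> [] \<and> B \<noteq> last G2 \<and>
           is_board_offsets (X1 @ A # G1 @ G2 @ B # C # X2)"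
proof -
  let ?R = "\<lambda>a b :: int. a - 1 \<le> b"
  have S: "successively ?R ((1 # X1) @ \<alpha> # G1 @ \<beta> # G2 @ \<gamma> # X2)"
    if "{#\<alpha>, \<beta>, \<gamma>#} = {#x, y, z#}" for \<alpha> \<beta> \<gamma>
    using all[OF that] by (simp add: is_board_offsets_def)
  have "G1 \<noteq> []"
    using S[of z x y] assms(1,2)
    by (auto simp: successively_append_iff successively_Cons add_mset_commute)
  moreover have "G2 \<noteq> []"
    using S[of y z x] assms(1,2)
    by (auto simp: successively_append_iff successively_Cons add_mset_commute)
  ultimately have split: "successively ?R (P @ \<alpha> # G1 @ \<beta> # G2 @ \<gamma> # X2) \<longleftrightarrow>
      successively ?R (P @ [\<alpha>]) \<and> ?R \<alpha> (hd G1) \<and> successively ?R G1 \<and> ?R (last G1) \<beta> \<and>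
      ?R \<beta> (hd G2) \<and> successively ?R G2 \<and> ?R (last G2) \<gamma> \<and> successively ?R (\<gamma> # X2)"
    and merged: "successively ?R (P @ \<alpha> # G1 @ G2 @ \<beta> # \<gamma> # X2) \<longleftrightarrow>
      successively ?R (P @ [\<alpha>]) \<and> ?R \<alpha> (hd G1) \<and> successively ?R G1 \<and> ?R (last G1) (hd G2) \<and>
      successively ?R G2 \<and> ?R (last G2) \<beta> \<and> ?R \<beta> \<gamma> \<and> successively ?R (\<gamma> # X2)" for P \<alpha> \<beta> \<gamma>
    by (auto simp: successively_append_iff successively_Cons)
  note facts = S[unfolded split[of "1 # X1"]]
  have "last G1 - 1 \<le> hd G2"
    using facts[of z x y] facts[of x z y] assms(1,2) by (auto simp: add_mset_commute)
  show ?thesis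
  proof (cases "last G2 = x")
    case False
    have "is_board_offsets (X1 @ z # G1 @ G2 @ x # y # X2)"
      unfolding is_board_offsets_def using merged[of "1 # X1" z x y] facts[of z x y] facts[of z y x]
        \<open>last G1 - 1 \<le> hd G2\<close> assms(1,2) by (auto simp: add_mset_commute)
    then show ?thesis
      using False \<open>G2 \<noteq> []\<close>
      by (intro exI[of _ z] exI[of _ x] exI[of _ y]) (auto simp: add_mset_commute)
  next
    case True
    have "is_board_offsets (X1 @ x # G1 @ G2 @ y # z # X2)"
      unfolding is_board_offsets_def using merged[of "1 # X1" x y z] facts[of x y z] facts[of x z y]
        \<open>last G1 - 1 \<le> hd G2\<close> True assms(1,2) by auto
    then show ?thesis
      using True \<open>G2 \<noteq> []\<close> assms(1) by (intro exI[of _ x] exI[of _ y] exI[of _ z]) auto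
  qed
qed

definition triple_arrangements :: "'a multiset \<Rightarrow> ('a \<times> 'a \<times> 'a) set" where
  "triple_arrangements M = {(\<alpha>, \<beta>, \<gamma>). {#\<alpha>, \<beta>, \<gamma>#} = M}"

lemma triple_arrangements_subset:
  "triple_arrangements {#x, y, z#}
     \<subseteq> set [(x, y, z), (x, z, y), (y, x, z), (y, z, x), (z, x, y), (z, y, x)]"
  by (auto simp: triple_arrangements_def add_eq_conv_ex)

lemma finite_triple_arrangements: "finite (triple_arrangements {#x, y, z#})"
  using triple_arrangements_subset by (rule finite_subset) simp

lemma card_triple_arrangements_le: "card (triple_arrangements {#x, y, z#}) \<le> 6"
proof -
  let ?xs = "[(x, y, z), (x, z, y), (y, x, z), (y, z, x), (z, x, y), (z, y, x)]"
  have "card (triple_arrangements {#x, y, z#}) \<le> card (set ?xs)"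
    by (rule card_mono[OF _ triple_arrangements_subset]) simp
  also have "\<dots> \<le> 6"
    using card_length[of ?xs] by simp
  finally show ?thesis .
qed

lemma card_triple_arrangements_le_3:
  assumes "\<not> distinct [x, y, z]"
  shows "card (triple_arrangements {#x, y, z#}) \<le> 3"
proof -
  have "triple_arrangements {#x, y, z#} \<subseteq> set [(x, y, z), (y, z, x), (z, x, y)]"
    using assms triple_arrangements_subset[of x y z] by auto
  then have "card (triple_arrangements {#x, y, z#}) \<le> card (set [(x, y, z), (y, z, x), (z, x, y)])"
    by (rule card_mono[rotated]) simp
  also have "\<dots> \<le> 3"
    using card_length[of "[(x, y, z), (y, z, x), (z, x, y)]"] by simp
  finally show ?thesis .
qed

lemma length_eq_3_iff: "length xs = 3 \<longleftrightarrow> (\<exists>x y z. xs = [x, y, z])"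
  by (auto simp: numeral_3_eq_3 length_Suc_conv)

lemma card_eq_3_ordered:
  fixes A :: "'a::linorder set"
  assumes "card A = 3"
  obtains x y z where "x < y" "y < z" "A = {x, y, z}"
proof -
  have "finite A" using assms by (simp add: card_ge_0_finite)
  then have "length (sorted_list_of_set A) = 3"
    using assms by simp
  then obtain x y z where xs: "sorted_list_of_set A = [x, y, z]"
    unfolding length_eq_3_iff by blast
  have "sorted_wrt (<) [x, y, z]"
    using strict_sorted_list_of_set[of A] xs by simp
  moreover have "A = {x, y, z}"
    using set_sorted_list_of_set[OF \<open>finite A\<close>] xs by simp
  ultimately show thesis
    using that[of x y z] by simp
qed

lemma split_list_at_three:
  assumes "p < q" "q < r" "r < length u"
  obtains X1 G1 G2 X2 where "u = X1 @ u ! p # G1 @ u ! q # G2 @ u ! r # X2"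
    and "length X1 = p" "q = Suc (p + length G1)" "r = Suc (q + length G2)"
proof
  define X1 G1 G2 X2 where "X1 = take p u" and "G1 = drop (Suc p) (take q u)"
    and "G2 = drop (Suc q) (take r u)" and "X2 = drop (Suc r) u"
  have "take q u = X1 @ u ! p # G1"
    using id_take_nth_drop[of p "take q u"] assms by (simp add: X1_def G1_def)
  moreover have "take r u = take q u @ u ! q # G2"
    using id_take_nth_drop[of q "take r u"] assms by (simp add: G2_def)
  moreover have "u = take r u @ u ! r # X2"
    using id_take_nth_drop[of r u] assms by (simp add: X2_def)
  ultimately show "u = X1 @ u ! p # G1 @ u ! q # G2 @ u ! r # X2"
    by simp
  show "length X1 = p" "q = Suc (p + length G1)" "r = Suc (q + length G2)"
    using assms by (simp_all add: X1_def G1_def G2_def)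
qed

lemma mset3_sorted:
  fixes a b c :: "'a::linorder"
  obtains x y z where "x \<le> y" "y \<le> z" "{#a, b, c#} = {#x, y, z#}"
proof -
  define s where "s = sort [a, b, c]"
  have "length s = 3" unfolding s_def length_sort by simp
  then obtain x y z where s: "s = [x, y, z]" unfolding length_eq_3_iff by blast
  have "sorted s" unfolding s_def by (rule sorted_sort)
  moreover have "mset s = {#a, b, c#}" unfolding s_def mset_sort by simp
  ultimately show thesis
    using that[of x y z] by (simp add: s)
qed

lemma offset_class_subset_rearrangements:
  assumes "u0 \<in> offset_class n M" "p < q" "q < r" "r < n"
    and confined: "\<And>u l. u \<in> offset_class n M \<Longrightarrow> l < n \<Longrightarrow> l \<notin> {p, q, r} \<Longrightarrow> u ! l = u0 ! l"
  shows "offset_class n M \<subseteq>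
    (\<lambda>(\<alpha>, \<beta>, \<gamma>). u0[p := \<alpha>, q := \<beta>, r := \<gamma>]) ` triple_arrangements {#u0 ! p, u0 ! q, u0 ! r#}"
proof
  fix u assume u: "u \<in> offset_class n M"
  then have len: "length u = n" "length u0 = n" and "mset u = mset u0"
    using assms(1) by (auto simp: offset_class_def)
  then have "image_mset (nth u) (mset_set {p, q, r}) = image_mset (nth u0) (mset_set {p, q, r})"
    using assms(2-4) confined[OF u] by (intro image_mset_nth_eq_if_agree_outside) auto
  then have "(u ! p, u ! q, u ! r) \<in> triple_arrangements {#u0 ! p, u0 ! q, u0 ! r#}"
    using assms(2,3) by (simp add: triple_arrangements_def)
  moreover have "u = u0[p := u ! p, q := u ! q, r := u ! r]"
    using confined[OF u] assms(2-4) len by (intro nth_equalityI) (auto simp: nth_list_update)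
  ultimately show "u \<in> (\<lambda>(\<alpha>, \<beta>, \<gamma>). u0[p := \<alpha>, q := \<beta>, r := \<gamma>])
      ` triple_arrangements {#u0 ! p, u0 ! q, u0 ! r#}"
    by (intro image_eqI[where x = "(u ! p, u ! q, u ! r)"]) auto
qed

lemma offset_class_escapes_three_positions:
  assumes u0: "u0 \<in> offset_class n M" and pqr: "p < q" "q < r" "r < n"
    and "distinct [u0 ! p, u0 ! q, u0 ! r]"
    and all: "\<And>\<alpha> \<beta> \<gamma>. {#\<alpha>, \<beta>, \<gamma>#} = {#u0 ! p, u0 ! q, u0 ! r#} \<Longrightarrow>
      u0[p := \<alpha>, q := \<beta>, r := \<gamma>] \<in> offset_class n M"
  shows "\<exists>w \<in> offset_class n M. \<exists>l < n. l \<notin> {p, q, r} \<and> w ! l \<noteq> u0 ! l"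
proof -
  have "length u0 = n" using u0 by (simp add: offset_class_def)
  then obtain X1 G1 G2 X2 where u0_split: "u0 = X1 @ u0 ! p # G1 @ u0 ! q # G2 @ u0 ! r # X2"
    and lens: "length X1 = p" "q = Suc (p + length G1)" "r = Suc (q + length G2)"
    using pqr by (metis split_list_at_three)
  have update: "u0[p := \<alpha>, q := \<beta>, r := \<gamma>] = X1 @ \<alpha> # G1 @ \<beta> # G2 @ \<gamma> # X2" for \<alpha> \<beta> \<gamma>
    by (subst u0_split) (simp add: lens list_update_append)
  obtain x y z where "x \<le> y" "y \<le> z" and xyz: "{#u0 ! p, u0 ! q, u0 ! r#} = {#x, y, z#}"
    by (rule mset3_sorted)
  moreover have "distinct [x, y, z]"
    using mset_eq_imp_distinct_iff[of "[u0 ! p, u0 ! q, u0 ! r]" "[x, y, z]"] xyz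
      \<open>distinct [u0 ! p, u0 ! q, u0 ! r]\<close> by simp
  ultimately have "x < y" "y < z" by auto
  moreover have "is_board_offsets (X1 @ \<alpha> # G1 @ \<beta> # G2 @ \<gamma> # X2)"
    if "{#\<alpha>, \<beta>, \<gamma>#} = {#x, y, z#}" for \<alpha> \<beta> \<gamma>
    using all[of \<alpha> \<beta> \<gamma>] that xyz by (simp add: update offset_class_def)
  ultimately obtain A B C where ABC: "{#A, B, C#} = {#x, y, z#}" and "G2 \<noteq> []" "B \<noteq> last G2"
    and valid: "is_board_offsets (X1 @ A # G1 @ G2 @ B # C # X2)"
    using is_board_offsets_shift_block by blast
  let ?w = "X1 @ A # G1 @ G2 @ B # C # X2"
  have "?w \<in> offset_class n M"
    using all[of A B C] ABC xyz valid by (simp add: update offset_class_def add_mset_commute)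
  moreover define l where "l = q + length G2"
  have "l < n" "l \<notin> {p, q, r}"
    using \<open>G2 \<noteq> []\<close> pqr lens by (auto simp: l_def)
  moreover have "?w ! l = B"
    using lens by (simp add: l_def nth_append)
  moreover have "u0 ! l = (X1 @ u0 ! p # G1 @ u0 ! q # G2 @ u0 ! r # X2) ! l"
    using arg_cong[where f = "\<lambda>v. v ! l", OF u0_split] .
  moreover have "\<dots> = last G2"
    using lens \<open>G2 \<noteq> []\<close> by (simp add: l_def nth_append last_conv_nth)
  ultimately show ?thesis
    using \<open>B \<noteq> last G2\<close> by metis
qed

text \<open>Six members agreeing outside three positions would have to be all six arrangements of three
  distinct values in these positions.\<close>
lemma card_offset_class_lt_6_if_confined:
  assumes u0: "u0 \<in> offset_class n M" and D: "card D = 3" "D \<subseteq> {..<n}"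
    and confined: "\<And>u l. u \<in> offset_class n M \<Longrightarrow> l < n \<Longrightarrow> l \<notin> D \<Longrightarrow> u ! l = u0 ! l"
  shows "card (offset_class n M) < 6"
proof (rule ccontr)
  assume "\<not> card (offset_class n M) < 6"
  obtain p q r where pqr: "p < q" "q < r" "D = {p, q, r}"
    using D(1) by (rule card_eq_3_ordered)
  then have "r < n" using D(2) by auto
  let ?W = "offset_class n M" and ?T = "triple_arrangements {#u0 ! p, u0 ! q, u0 ! r#}"
    and ?F = "\<lambda>(\<alpha>, \<beta>, \<gamma>). u0[p := \<alpha>, q := \<beta>, r := \<gamma>]"
  have sub: "?W \<subseteq> ?F ` ?T"
    using confined pqr(3) by (intro offset_class_subset_rearrangements[OF u0 pqr(1,2) \<open>r < n\<close>]) auto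
  have card_le: "card ?W \<le> card (?F ` ?T)" "card (?F ` ?T) \<le> card ?T"
    using card_mono[OF _ sub] card_image_le[of ?T ?F] by (simp_all add: finite_triple_arrangements)
  have "distinct [u0 ! p, u0 ! q, u0 ! r]"
  proof (rule ccontr)
    assume "\<not> distinct [u0 ! p, u0 ! q, u0 ! r]"
    then have "card ?T \<le> 3" by (rule card_triple_arrangements_le_3)
    with card_le \<open>\<not> card ?W < 6\<close> show False by linarith
  qed
  moreover have "?W = ?F ` ?T"
    using sub card_le \<open>\<not> card ?W < 6\<close> card_triple_arrangements_le[of "u0 ! p" "u0 ! q" "u0 ! r"]
    by (intro card_seteq) (auto simp: finite_triple_arrangements)
  then have "u0[p := \<alpha>, q := \<beta>, r := \<gamma>] \<in> ?W"
    if "{#\<alpha>, \<beta>, \<gamma>#} = {#u0 ! p, u0 ! q, u0 ! r#}" for \<alpha> \<beta> \<gamma>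
  proof -
    have "(\<alpha>, \<beta>, \<gamma>) \<in> ?T" using that by (simp add: triple_arrangements_def)
    then show ?thesis using \<open>?W = ?F ` ?T\<close> by (metis (no_types, lifting) case_prod_conv imageI)
  qed
  ultimately obtain w l where "w \<in> ?W" "l < n" "l \<notin> D" "w ! l \<noteq> u0 ! l"
    using offset_class_escapes_three_positions[OF u0 pqr(1,2) \<open>r < n\<close>] pqr(3) by blast
  then show False
    using confined by blast
qed

lemma three_le_card_mismatches:
  assumes "mset u = mset w" "u \<noteq> w" "card (mismatches u w) \<noteq> 2"
  shows "3 \<le> card (mismatches u w)"
proof -
  have "card (mismatches u w) \<noteq> 0"
    using assms(1,2) mset_eq_length[OF assms(1)] by (simp add: mismatches_eq_empty_iff)
  then show ?thesis
    using card_mismatches_ne_1[OF assms(1)] assms(3) by linarith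
qed

lemma card_offset_class_lt_6_if_biclique:
  assumes W: "X \<union> Y = offset_class n M"
    and across: "\<And>x y. x \<in> X \<Longrightarrow> y \<in> Y \<Longrightarrow> card (mismatches x y) = 2"
    and x: "x \<in> X" "x' \<in> X" "3 \<le> card (mismatches x x')"
    and y: "y \<in> Y" "y' \<in> Y" "card (mismatches y y') = 3"
  shows "card (offset_class n M) < 6"
proof (rule card_offset_class_lt_6_if_confined)
  have len: "length v = n" if "v \<in> X \<union> Y" for v
    using that W by (auto simp: offset_class_def)
  show "y \<in> offset_class n M" using y W by blast
  show "mismatches y y' \<subseteq> {..<n}"
    using mismatches_subset[of y y'] len y by auto
  show "u ! l = y ! l" if "u \<in> offset_class n M" "l < n" "l \<notin> mismatches y y'" for u l
    using biclique_agrees_off_mismatches[OF len across x y] that W by blast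
qed (use y in simp)

lemma eq_if_same_antipode:
  assumes len: "length x = n" "length z = n" "length z' = n" "length y = n" "length y' = n"
    and two: "\<And>v. v \<in> {x, z, z'} \<Longrightarrow> card (mismatches v y) = 2 \<and> card (mismatches v y') = 2"
    and far: "4 \<le> card (mismatches y y')" "4 \<le> card (mismatches x z)" "4 \<le> card (mismatches x z')"
  shows "z = z'"
proof (rule nth_equalityI)
  fix l assume "l < length z"
  then show "z ! l = z' ! l"
    using nth_antipode[of x n z y y' l] nth_antipode[of x n z' y y' l] len two far by simp
qed (simp add: len)

lemma graph_iso_K33_sides:
  assumes "graph_iso K33_vertices K33_edge W F"
  obtains X Y where "X \<union> Y = W" "X \<inter> Y = {}" "card X = 3" "card Y = 3"
    "\<And>x y. x \<in> X \<Longrightarrow> y \<in> Y \<Longrightarrow> F x y \<and> F y x"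
    "\<And>u v. u \<in> X \<Longrightarrow> v \<in> X \<Longrightarrow> \<not> F u v" "\<And>u v. u \<in> Y \<Longrightarrow> v \<in> Y \<Longrightarrow> \<not> F u v"
proof -
  obtain f where bij: "bij_betw f {0..<6::nat} W"
    and hom: "\<And>i j. i < 6 \<Longrightarrow> j < 6 \<Longrightarrow> (i < 3 \<longleftrightarrow> 3 \<le> j) \<longleftrightarrow> F (f i) (f j)"
    using assms by (auto simp: graph_iso_def K33_vertices_def K33_edge_def)
  have inj: "inj_on f {0..<6}" using bij by (rule bij_betw_imp_inj_on)
  have "f ` {0..<3} \<union> f ` {3..<6} = f ` {0..<6}"
    by (simp flip: image_Un add: ivl_disj_un_two(3))
  then have "f ` {0..<3} \<union> f ` {3..<6} = W"
    using bij by (simp add: bij_betw_def)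
  moreover have "f ` {0..<3} \<inter> f ` {3..<6} = {}"
    using inj_on_image_Int[OF inj, of "{0..<3}" "{3..<6}"] by auto
  moreover have "card (f ` {0..<3}) = 3" "card (f ` {3..<6}) = 3"
    using inj by (simp_all add: card_image inj_on_subset)
  moreover have "F x y \<and> F y x" if xy: "x \<in> f ` {0..<3}" "y \<in> f ` {3..<6}" for x y
  proof -
    obtain i j where "i < 3" "3 \<le> j" "j < 6" "x = f i" "y = f j" using xy by auto
    then show ?thesis using hom[of i j] hom[of j i] by simp
  qed
  moreover have "\<not> F u v" if uv: "u \<in> f ` {0..<3}" "v \<in> f ` {0..<3}" for u v
  proof -
    obtain i j where "i < 3" "j < 3" "u = f i" "v = f j" using uv by auto
    then show ?thesis using hom[of i j] by simp
  qed
  moreover have "\<not> F u v" if uv: "u \<in> f ` {3..<6}" "v \<in> f ` {3..<6}" for u v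
  proof -
    obtain i j where "3 \<le> i" "i < 6" "3 \<le> j" "j < 6" "u = f i" "v = f j" using uv by auto
    then show ?thesis using hom[of i j] by simp
  qed
  ultimately show thesis
    using that by blast
qed

lemma offset_class_not_K33:
  "\<not> graph_iso K33_vertices K33_edge (offset_class n M) (\<lambda>u w. card (mismatches u w) = 2)"
proof
  let ?W = "offset_class n M"
  assume "graph_iso K33_vertices K33_edge ?W (\<lambda>u w. card (mismatches u w) = 2)"
  then obtain X Y where XY: "X \<union> Y = ?W" "X \<inter> Y = {}" "card X = 3" "card Y = 3"
    and across: "\<And>x y. x \<in> X \<Longrightarrow> y \<in> Y \<Longrightarrow> card (mismatches x y) = 2 \<and> card (mismatches y x) = 2"
    and within: "\<And>u v. u \<in> X \<Longrightarrow> v \<in> X \<Longrightarrow> card (mismatches u v) \<noteq> 2"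
      "\<And>u v. u \<in> Y \<Longrightarrow> v \<in> Y \<Longrightarrow> card (mismatches u v) \<noteq> 2"
    by (rule graph_iso_K33_sides) blast
  have W: "length v = n" "mset v = M" if "v \<in> X \<union> Y" for v
    using that XY(1) by (auto simp: offset_class_def)
  have card_W: "card ?W = 6"
    using XY card_Un_disjoint[of X Y] by (simp add: card_ge_0_finite)
  have not_3: "card (mismatches y y') \<noteq> 3"
    if "P \<union> Q = ?W" "card P = 3" "\<And>x y. x \<in> P \<Longrightarrow> y \<in> Q \<Longrightarrow> card (mismatches x y) = 2"
      "\<And>u v. u \<in> P \<Longrightarrow> v \<in> P \<Longrightarrow> u \<noteq> v \<Longrightarrow> 3 \<le> card (mismatches u v)" "y \<in> Q" "y' \<in> Q"
    for P Q y y'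
  proof
    assume "card (mismatches y y') = 3"
    obtain x x' where "x \<in> P" "x' \<in> P" "x \<noteq> x'"
      using \<open>card P = 3\<close> by (auto simp: card_3_iff)
    then have "card ?W < 6"
      using that \<open>card (mismatches y y') = 3\<close>
        card_offset_class_lt_6_if_biclique[of P Q n M x x' y y']
      by auto
    with card_W show False by simp
  qed
  have three: "3 \<le> card (mismatches u v)" if "u \<in> S" "v \<in> S" "u \<noteq> v" "S = X \<or> S = Y" for S u v
    using that W within by (intro three_le_card_mismatches) auto
  have far: "4 \<le> card (mismatches u v)" if "u \<in> S" "v \<in> S" "u \<noteq> v" "S = X \<or> S = Y" for S u v
  proof -
    have "card (mismatches u v) \<noteq> 3"
    proof (cases "S = X")
      case True
      then show ?thesis
        using not_3[of Y X u v] that XY(1,4) across three[where S = Y] by (auto simp: Un_commute)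
    next
      case False
      then show ?thesis
        using not_3[of X Y u v] that XY(1,3) across three[where S = X] by auto
    qed
    then show ?thesis
      using three[OF that] by linarith
  qed
  obtain x z z' where X: "X = {x, z, z'}" "x \<noteq> z" "x \<noteq> z'" "z \<noteq> z'"
    using XY(3) by (auto simp: card_3_iff)
  obtain y y' where "y \<in> Y" "y' \<in> Y" "y \<noteq> y'"
    using XY(4) by (auto simp: card_3_iff)
  then have "z = z'"
    using X W across far[where S = Y and u = y and v = y'] far[where S = X and u = x and v = z]
      far[where S = X and u = x and v = z']
    by (intro eq_if_same_antipode[of x n z z' y y']) auto
  with X show False by simp
qed

section \<open>The rook equivalence graph\<close>

lemma length_le_sum_list: "0 \<notin> set b \<Longrightarrow> length b \<le> sum_list (b :: nat list)"
  by (induction b) auto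

lemma sorted_pad: "sorted b \<Longrightarrow> sorted (pad n b)"
  by (auto simp: pad_def sorted_append)

lemma length_pad: "length b \<le> n \<Longrightarrow> length (pad n b) = n"
  by (simp add: pad_def)

lemma sum_list_pad: "sum_list (pad n b) = sum_list b"
  by (simp add: pad_def)

lemma filter_nonzero_pad: "0 \<notin> set b \<Longrightarrow> filter (\<lambda>h. 0 < h) (pad n b) = b"
  by (auto simp: pad_def filter_id_conv intro: gr0I)

lemma pad_filter_nonzero:
  assumes "sorted b" "length b = n"
  shows "pad n (filter (\<lambda>h. 0 < h) b) = b"
  using assms
proof (induction b arbitrary: n)
  case (Cons h b)
  show ?case
  proof (cases "h = 0")
    case True
    have "n - length (filter (\<lambda>h. 0 < h) b) = Suc (length b - length (filter (\<lambda>h. 0 < h) b))"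
      using Cons.prems(2) by (metis Suc_diff_le length_Cons length_filter_le)
    then show ?thesis
      using Cons.IH[of "length b"] Cons.prems True by (simp add: pad_def)
  next
    case False
    then have "filter (\<lambda>h. 0 < h) (h # b) = h # b"
      using Cons.prems(1) by (auto simp: filter_id_conv)
    then show ?thesis
      using Cons.prems(2) by (simp add: pad_def)
  qed
qed (simp add: pad_def)

lemma mismatches_offsets:
  "length b = length b' \<Longrightarrow> mismatches (offsets b) (offsets b') = mismatches b b'"
  by (auto simp: mismatches_def)

lemma card_mismatches_replicate_append:
  assumes "length u = length w"
  shows "card (mismatches (replicate d x @ u) (replicate d x @ w)) = card (mismatches u w)"
proof -
  have "mismatches (replicate d x @ u) (replicate d x @ w) = (\<lambda>l. l + d) ` mismatches u w"
  proof (intro equalityI subsetI)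
    fix l assume "l \<in> mismatches (replicate d x @ u) (replicate d x @ w)"
    then show "l \<in> (\<lambda>l. l + d) ` mismatches u w"
      using assms by (intro image_eqI[where x = "l - d"])
        (auto simp: mismatches_def nth_append split: if_splits)
  qed (use assms in \<open>auto simp: mismatches_def nth_append\<close>)
  then show ?thesis
    by (simp add: card_image inj_on_def)
qed

lemma sum_list_split_two_nth:
  fixes P :: "'a::comm_monoid_add list"
  assumes "x < length P" "y < length P" "x \<noteq> y"
  shows "sum_list P = P ! x + P ! y + (\<Sum>l\<in>{..<length P} - {x, y}. P ! l)"
proof -
  have "sum_list P = (\<Sum>l\<in>{..<length P}. P ! l)"
    by (simp add: sum_list_sum_nth atLeast0LessThan)
  also have "\<dots> = (\<Sum>l\<in>{..<length P} - {x, y}. P ! l) + (\<Sum>l\<in>{x, y}. P ! l)"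
    using assms by (intro sum.subset_diff) auto
  finally show ?thesis
    using assms(3) by (simp add: add.commute)
qed

lemma column_transfer_iff_card_mismatches:
  fixes P1 P2 :: "nat list"
  assumes len: "length P1 = m" "length P2 = m" and sum: "sum_list P1 = sum_list P2"
  shows "(\<exists>i j k. i < m \<and> j < m \<and> i \<noteq> j \<and> k > 0 \<and> P1 ! i = P2 ! i + k \<and> P2 ! j = P1 ! j + k \<and>
            (\<forall>l<m. l \<noteq> i \<longrightarrow> l \<noteq> j \<longrightarrow> P1 ! l = P2 ! l))
         \<longleftrightarrow> card (mismatches P1 P2) = 2"
proof
  assume "\<exists>i j k. i < m \<and> j < m \<and> i \<noteq> j \<and> k > 0 \<and> P1 ! i = P2 ! i + k \<and> P2 ! j = P1 ! j + k \<and>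
            (\<forall>l<m. l \<noteq> i \<longrightarrow> l \<noteq> j \<longrightarrow> P1 ! l = P2 ! l)"
  then obtain i j k where "i < m" "j < m" "i \<noteq> j" "k > 0"
      "P1 ! i = P2 ! i + k" "P2 ! j = P1 ! j + k"
      "\<forall>l<m. l \<noteq> i \<longrightarrow> l \<noteq> j \<longrightarrow> P1 ! l = P2 ! l" by blast
  then have "mismatches P1 P2 = {i, j}"
    using len by (auto simp: mismatches_def)
  then show "card (mismatches P1 P2) = 2"
    using \<open>i \<noteq> j\<close> by simp
next
  assume "card (mismatches P1 P2) = 2"
  then obtain x y where xy: "mismatches P1 P2 = {x, y}" "x \<noteq> y"
    by (auto simp: card_2_iff)
  then have "x < m" "y < m" "P1 ! x \<noteq> P2 ! x" "P1 ! y \<noteq> P2 ! y"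
    and rest: "\<forall>l<m. l \<noteq> x \<longrightarrow> l \<noteq> y \<longrightarrow> P1 ! l = P2 ! l"
    using len by (auto simp: mismatches_def)
  have "(\<Sum>l\<in>{..<m} - {x, y}. P1 ! l) = (\<Sum>l\<in>{..<m} - {x, y}. P2 ! l)"
    using rest by (intro sum.cong) auto
  then have "P1 ! x + P1 ! y = P2 ! x + P2 ! y"
    using sum_list_split_two_nth[of x P1 y] sum_list_split_two_nth[of x P2 y]
      \<open>x < m\<close> \<open>y < m\<close> xy(2) len sum
    by simp
  then show "\<exists>i j k. i < m \<and> j < m \<and> i \<noteq> j \<and> k > 0 \<and> P1 ! i = P2 ! i + k \<and> P2 ! j = P1 ! j + k \<and>
            (\<forall>l<m. l \<noteq> i \<longrightarrow> l \<noteq> j \<longrightarrow> P1 ! l = P2 ! l)"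
  proof (cases "P2 ! x < P1 ! x")
    case True
    then show ?thesis
      using \<open>x < m\<close> \<open>y < m\<close> xy(2) \<open>P1 ! x + P1 ! y = P2 ! x + P2 ! y\<close> rest
      by (intro exI[of _ x] exI[of _ y] exI[of _ "P1 ! x - P2 ! x"]) auto
  next
    case False
    then show ?thesis
      using \<open>x < m\<close> \<open>y < m\<close> xy(2) \<open>P1 ! x \<noteq> P2 ! x\<close> \<open>P1 ! x + P1 ! y = P2 ! x + P2 ! y\<close> rest
      by (intro exI[of _ y] exI[of _ x] exI[of _ "P2 ! x - P1 ! x"]) auto
  qed
qed

lemma rook_edge_iff_card_mismatches_pad:
  assumes "length C1 \<le> n" "length C2 \<le> n" "sum_list C1 = sum_list C2"
  shows "rook_edge C1 C2 \<longleftrightarrow> card (mismatches (pad n C1) (pad n C2)) = 2"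
proof -
  define m where "m = max (length C1) (length C2)"
  have len: "length (pad m C1) = m" "length (pad m C2) = m"
    by (simp_all add: m_def length_pad)
  have "rook_edge C1 C2 \<longleftrightarrow> card (mismatches (pad m C1) (pad m C2)) = 2"
    unfolding rook_edge_def Let_def m_def[symmetric]
    using assms(3) by (intro column_transfer_iff_card_mismatches[OF len]) (simp add: sum_list_pad)
  moreover have "pad n C = replicate (n - m) 0 @ pad m C" if "length C \<le> m" for C
    using that assms(1,2) by (simp add: pad_def m_def replicate_add[symmetric])
  ultimately show ?thesis
    using len by (simp add: m_def card_mismatches_replicate_append)
qed

lemma rook_graph_vertexD:
  assumes "C \<in> rook_graph_vertices B"
  shows "sorted C" "0 \<notin> set C" "rook_equiv C B" "length C \<le> sum_list B"
proof -
  show "sorted C" "0 \<notin> set C" "rook_equiv C B"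
    using assms by (auto simp: rook_graph_vertices_def canonical_board_def)
  then show "length C \<le> sum_list B"
    using length_le_sum_list[of C] sum_list_eq_if_rook_equiv by fastforce
qed

lemma pad_filter_board_of_offsets:
  "is_board_offsets c \<Longrightarrow>
     pad (length c) (filter (\<lambda>h. 0 < h) (board_of_offsets c)) = board_of_offsets c"
  by (intro pad_filter_nonzero) (simp_all add: sorted_board_of_offsets)

lemma offsets_pad_in_offset_class:
  assumes "C \<in> rook_graph_vertices B" "sorted B" "length B \<le> n" "sum_list B \<le> n"
  shows "offsets (pad n C) \<in> offset_class n (mset (offsets (pad n B)))"
proof -
  note C = rook_graph_vertexD[OF assms(1)]
  have "length C \<le> n" using C(4) assms(4) by linarith
  then show ?thesis
    using rook_equiv_iff_mset_offsets[OF C(1) assms(2) _ assms(3)] C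
    by (simp add: offset_class_def length_pad is_board_offsets_offsets sorted_pad)
qed

lemma board_of_offsets_in_rook_graph_vertices:
  assumes "c \<in> offset_class n (mset (offsets (pad n B)))" "sorted B" "length B \<le> n"
  shows "filter (\<lambda>h. 0 < h) (board_of_offsets c) \<in> rook_graph_vertices B" (is "?C \<in> _")
proof -
  have c: "length c = n" "is_board_offsets c" "mset c = mset (offsets (pad n B))"
    using assms(1) by (auto simp: offset_class_def)
  then have "sorted ?C" "length ?C \<le> n"
    using sorted_board_of_offsets[OF c(2)] length_filter_le[of _ "board_of_offsets c"]
    by (auto simp: sorted_wrt_filter)
  moreover from this have "rook_equiv ?C B"
    using rook_equiv_iff_mset_offsets[OF _ assms(2) _ assms(3)]
      pad_filter_board_of_offsets[OF c(2)] c
    by (simp add: offsets_board_of_offsets)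
  ultimately show ?thesis
    by (auto simp: rook_graph_vertices_def canonical_board_def)
qed

theorem rook_graph_iso_offset_graph:
  assumes "sorted B" "length B \<le> n" "sum_list B \<le> n"
  shows "graph_iso (rook_graph_vertices B) rook_edge
           (offset_class n (mset (offsets (pad n B)))) (\<lambda>u w. card (mismatches u w) = 2)"
proof -
  let ?V = "rook_graph_vertices B" and ?W = "offset_class n (mset (offsets (pad n B)))"
  have "bij_betw (\<lambda>C. offsets (pad n C)) ?V ?W"
  proof (rule bij_betw_byWitness[where f' = "\<lambda>c. filter (\<lambda>h. 0 < h) (board_of_offsets c)"])
    show "\<forall>C\<in>?V. filter (\<lambda>h. 0 < h) (board_of_offsets (offsets (pad n C))) = C"
      using rook_graph_vertexD by (simp add: filter_nonzero_pad)
    show "\<forall>c\<in>?W. offsets (pad n (filter (\<lambda>h. 0 < h) (board_of_offsets c))) = c"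
      using pad_filter_board_of_offsets by (auto simp: offset_class_def offsets_board_of_offsets)
  qed (use assms offsets_pad_in_offset_class board_of_offsets_in_rook_graph_vertices in auto)
  moreover have "rook_edge C1 C2 \<longleftrightarrow> card (mismatches (offsets (pad n C1)) (offsets (pad n C2))) = 2"
    if "C1 \<in> ?V" "C2 \<in> ?V" for C1 C2
  proof -
    note C1 = rook_graph_vertexD[OF that(1)] and C2 = rook_graph_vertexD[OF that(2)]
    have "length C1 \<le> n" "length C2 \<le> n"
      using C1(4) C2(4) assms(3) by linarith+
    moreover have "sum_list C1 = sum_list C2"
      using sum_list_eq_if_rook_equiv[OF C1(3)] sum_list_eq_if_rook_equiv[OF C2(3)] by simp
    ultimately show ?thesis
      by (simp add: rook_edge_iff_card_mismatches_pad mismatches_offsets length_pad)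
  qed
  ultimately show ?thesis
    unfolding graph_iso_def by blast
qed

lemma graph_iso_sym:
  assumes "graph_iso V E W F" shows "graph_iso W F V E"
proof -
  obtain f where bij: "bij_betw f V W" and hom: "\<And>u v. u \<in> V \<Longrightarrow> v \<in> V \<Longrightarrow> E u v \<longleftrightarrow> F (f u) (f v)"
    using assms by (auto simp: graph_iso_def)
  let ?g = "inv_into V f"
  have bij_g: "bij_betw ?g W V"
    by (rule bij_betw_inv_into[OF bij])
  moreover have "F a b \<longleftrightarrow> E (?g a) (?g b)" if "a \<in> W" "b \<in> W" for a b
    using hom[of "?g a" "?g b"] bij_betwE[OF bij_g] that bij_betw_inv_into_right[OF bij] by simp
  ultimately show ?thesis
    unfolding graph_iso_def by blast
qed

lemma graph_iso_trans:
  assumes "graph_iso U D V E" "graph_iso V E W F" shows "graph_iso U D W F"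
proof -
  obtain f where f: "bij_betw f U V" and hom_f: "\<And>u v. u \<in> U \<Longrightarrow> v \<in> U \<Longrightarrow> D u v \<longleftrightarrow> E (f u) (f v)"
    using assms(1) by (auto simp: graph_iso_def)
  obtain g where g: "bij_betw g V W" and hom_g: "\<And>u v. u \<in> V \<Longrightarrow> v \<in> V \<Longrightarrow> E u v \<longleftrightarrow> F (g u) (g v)"
    using assms(2) by (auto simp: graph_iso_def)
  have "bij_betw (g \<circ> f) U W"
    using f g by (rule bij_betw_trans)
  moreover have "D u v \<longleftrightarrow> F ((g \<circ> f) u) ((g \<circ> f) v)" if "u \<in> U" "v \<in> U" for u v
    using hom_f[OF that] hom_g bij_betwE[OF f] that by simp
  ultimately show ?thesis
    unfolding graph_iso_def by blast
qed

theorem theorem13: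
  fixes B :: "nat list"
  assumes "sorted B"
  shows "\<not> graph_iso (rook_graph_vertices B) rook_edge K33_vertices K33_edge"
proof
  define n where "n = length B + sum_list B"
  let ?W = "offset_class n (mset (offsets (pad n B)))"
    and ?offset_graph = "\<lambda>u w. card (mismatches u w) = 2"
  assume "graph_iso (rook_graph_vertices B) rook_edge K33_vertices K33_edge"
  then have "graph_iso K33_vertices K33_edge (rook_graph_vertices B) rook_edge"
    by (rule graph_iso_sym)
  moreover have "graph_iso (rook_graph_vertices B) rook_edge ?W ?offset_graph"
    using assms by (intro rook_graph_iso_offset_graph) (simp_all add: n_def)
  ultimately have "graph_iso K33_vertices K33_edge ?W ?offset_graph"
    by (rule graph_iso_trans)
  then show False
    using offset_class_not_K33 by blast
qed

end
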